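(* Let $q$ be a prime power and $t\ge 1$ an integer. In a projective space over $\mathbb{F}_q$, let $\Omega$ be a $(t-2)$-dimensional subspace, $\Gamma$ a plane skew from $\Omega$, $\Pi=\langle\Omega,\Gamma\rangle$, $\bar{B}$ a small minimal blocking set of $\Gamma$, and $K$ the cone with vertex $\Omega$ and base $\bar{B}$. Then every plane $\pi$ of $\Pi$ meets $K$ either in the whole plane $\pi$, or in a union of lines through a fixed point, or in a minimal blocking set of $\pi$ that is projectively equivalent to $\bar{B}$.
   Context: The cone with vertex $\Omega$ and base $\bar{B}$ is $\bigcup_{P\in\bar B}\langle P,\Omega\rangle$. A blocking set of a plane over $\mathbb{F}_q$ is a point set meeting every line; minimal means no proper subset does; small means fewer than $3(q+1)/2$ points. *)

theory Defs
  imports "HOL-Analysis.Analysis"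
begin

text \<open>A projective subspace of projective dimension d is a linear subspace of V
  of (vector) dimension d+1; points are 1-dimensional subspaces.
  q = CARD('a).\<close>

type_synonym ('a,'n) psub = "('a^'n) set"

definition psubspace :: "('a::field,'n::finite) psub \<Rightarrow> bool" where
  "psubspace U \<longleftrightarrow> vec.subspace U"

definition ppoint :: "('a::field,'n::finite) psub \<Rightarrow> bool" where
  "ppoint P \<longleftrightarrow> vec.subspace P \<and> vec.dim P = 1"

definition pline :: "('a::field,'n::finite) psub \<Rightarrow> bool" where
  "pline L \<longleftrightarrow> vec.subspace L \<and> vec.dim L = 2"

definition pplane :: "('a::field,'n::finite) psub \<Rightarrow> bool" where
  "pplane L \<longleftrightarrow> vec.subspace L \<and> vec.dim L = 3"

definition pjoin :: "('a::field,'n::finite) psub \<Rightarrow> ('a,'n) psub \<Rightarrow> ('a,'n) psub" where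
  "pjoin U W = vec.span (U \<union> W)"

definition skew :: "('a::field,'n::finite) psub \<Rightarrow> ('a,'n) psub \<Rightarrow> bool" where
  "skew U W \<longleftrightarrow> U \<inter> W = {0}"

definition points_of :: "('a::field,'n::finite) psub \<Rightarrow> ('a,'n) psub set" where
  "points_of U = {P. ppoint P \<and> P \<subseteq> U}"

definition blocking_set :: "('a::field,'n::finite) psub \<Rightarrow> ('a,'n) psub set \<Rightarrow> bool" where
  "blocking_set G B \<longleftrightarrow> B \<subseteq> points_of G \<and>
     (\<forall>L. pline L \<and> L \<subseteq> G \<longrightarrow> (\<exists>P\<in>B. P \<subseteq> L))"

definition minimal_blocking_set :: "('a::field,'n::finite) psub \<Rightarrow> ('a,'n) psub set \<Rightarrow> bool" where
  "minimal_blocking_set G B \<longleftrightarrow> blocking_set G B \<and> (\<forall>B'. B' \<subset> B \<longrightarrow> \<not> blocking_set G B')"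

definition small_set :: "('a::{field,finite},'n::finite) psub set \<Rightarrow> bool" where
  "small_set B \<longleftrightarrow> 2 * card B < 3 * (CARD('a) + 1)"

definition cone :: "('a::field,'n::finite) psub \<Rightarrow> ('a,'n) psub set \<Rightarrow> ('a,'n) psub set" where
  "cone Om B = (\<Union>P\<in>B. points_of (pjoin P Om))"

definition proj_equiv :: "('a::field,'n::finite) psub set \<Rightarrow> ('a,'n) psub set \<Rightarrow> bool" where
  "proj_equiv S T \<longleftrightarrow> (\<exists>f. Vector_Spaces.linear (*s) (*s) f \<and> bij f \<and> (\<lambda>P. f ` P) ` S = T)"

end

theory Submission
  imports Defs
begin

text \<open>Let \<open>p\<close> be the linear projection with kernel \<open>\<Omega>\<close> that fixes \<open>\<Gamma>\<close> pointwise. A point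
  \<open>\<langle>x\<rangle>\<close> of \<open>\<langle>\<Omega>,\<Gamma>\<rangle>\<close> lies on the cone iff \<open>p x = 0\<close> or \<open>\<langle>p x\<rangle> \<in> B\<close>.
  If \<open>p\<close> is injective on \<open>\<pi>\<close>, it maps \<open>\<pi>\<close> isomorphically onto \<open>\<Gamma>\<close>, and the inverse
  isomorphism, extended to a collineation, maps \<open>B\<close> onto the section of the cone.
  Otherwise \<open>\<pi>\<close> contains a point \<open>R\<close> of \<open>\<Omega>\<close>, and with every point \<open>X \<noteq> R\<close> of the section
  the whole line \<open>XR\<close> lies on the cone, so the section is a union of lines through \<open>R\<close>
  (which also covers the case that all of \<open>\<pi>\<close> lies on the cone). Such an \<open>X\<close> exists:
  either \<open>p(\<pi>)\<close> contains a point of \<open>B\<close>, or, as \<open>B\<close> blocks every line of \<open>\<Gamma>\<close>,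
  \<open>p(\<pi>)\<close> is at most a point and \<open>\<pi> \<inter> \<Omega>\<close> is at least a line.\<close>

lemma ppoint_span_singleton: "(x::'a::field^'n) \<noteq> 0 \<Longrightarrow> ppoint (vec.span {x})"
  unfolding ppoint_def by (simp add: vec.dim_span)

lemma ppoint_eq_span_singleton:
  assumes "ppoint P" "v \<in> P" "v \<noteq> 0"
  shows "P = vec.span {v}"
proof -
  have P: "vec.subspace P" "vec.dim P = 1" using assms(1) unfolding ppoint_def by auto
  have "vec.span {v} \<subseteq> P" using P assms by (simp add: vec.span_minimal)
  moreover have "vec.dim P \<le> vec.dim (vec.span {v})" using P assms by (simp add: vec.dim_span)
  ultimately show ?thesis using vec.subspace_dim_equal[of "vec.span {v}" P] P by auto
qed

lemma ppoint_obtain_span_singleton: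
  assumes "ppoint P"
  obtains v where "v \<noteq> 0" "v \<in> P" "P = vec.span {v}"
proof -
  have P: "vec.subspace P" "vec.dim P = 1" using assms unfolding ppoint_def by auto
  then have "P \<noteq> {0}" by (metis vec.dim_span vec.dim_singleton vec.span_eq_iff zero_neq_one)
  then obtain v where "v \<in> P" "v \<noteq> 0" using P vec.subspace_0 by blast
  then show ?thesis using that ppoint_eq_span_singleton assms by blast
qed

lemma span_singleton_subset_iff:
  "vec.subspace U \<Longrightarrow> vec.span {x} \<subseteq> U \<longleftrightarrow> x \<in> U"
  using vec.span_base vec.span_minimal by blast

lemma points_of_subspace_iff:
  assumes "vec.subspace U"
  shows "X \<in> points_of U \<longleftrightarrow> (\<exists>x\<in>U. x \<noteq> 0 \<and> X = vec.span {x})"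
proof
  assume "X \<in> points_of U"
  then have "ppoint X" "X \<subseteq> U" unfolding points_of_def by auto
  then show "\<exists>x\<in>U. x \<noteq> 0 \<and> X = vec.span {x}"
    by (metis ppoint_obtain_span_singleton subsetD)
qed (use assms ppoint_span_singleton span_singleton_subset_iff in \<open>auto simp: points_of_def\<close>)

lemma span_singleton_mem_points_of_iff:
  "vec.subspace U \<Longrightarrow> x \<noteq> 0 \<Longrightarrow> vec.span {x} \<in> points_of U \<longleftrightarrow> x \<in> U"
  unfolding points_of_def using ppoint_span_singleton span_singleton_subset_iff by blast

lemma mem_pjoin_iff:
  assumes "vec.subspace U" "vec.subspace W"
  shows "x \<in> pjoin U W \<longleftrightarrow> (\<exists>a\<in>U. \<exists>c\<in>W. x = a + c)"
proof -
  have "vec.span U = U" "vec.span W = W" using assms by (simp_all add: vec.span_eq_iff)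
  then show ?thesis unfolding pjoin_def vec.span_Un by blast
qed

lemma span_singleton_scale: "(c::'a::field) \<noteq> 0 \<Longrightarrow> vec.span {c *s (x::'a^'n)} = vec.span {x}"
  using vec.span_image_scale[of "{x}" "\<lambda>_. c"] by simp

lemma pline_span_pair:
  assumes "(x::'a::field^'n) \<notin> vec.span {r}" "r \<noteq> 0"
  shows "pline (vec.span {x, r})"
proof -
  have "vec.independent {x, r}" using assms by (simp add: vec.independent_insert)
  moreover have "x \<noteq> r" using assms vec.span_base by blast
  ultimately show ?thesis unfolding pline_def using vec.dim_span_eq_card_independent by fastforce
qed

lemma subspace_dim_ge_2_obtain_pline:
  assumes "vec.subspace (W::('a::field^'n) set)" "vec.dim W \<ge> 2"
  obtains L where "pline L" "L \<subseteq> W"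
proof -
  obtain C where C: "finite C" "C \<subseteq> W" "vec.independent C" "vec.span C = W" "card C = vec.dim W"
    by (rule vec.basis_subspace_exists[OF assms(1)])
  have "\<not> card C \<le> Suc 0" using assms C by simp
  then obtain a b where ab: "a \<in> C" "b \<in> C" "a \<noteq> b"
    using C(1) card_le_Suc0_iff_eq[of C] by auto
  have ind: "vec.independent {a, b}" using vec.independent_mono[OF C(3), of "{a,b}"] ab by auto
  have "vec.span {a, b} \<subseteq> W" using C ab assms(1) by (intro vec.span_minimal) auto
  moreover have "pline (vec.span {a,b})" unfolding pline_def
    using vec.dim_span_eq_card_independent[OF ind] ab by simp
  ultimately show ?thesis using that by blast
qed

lemma blocking_set_plane_nonempty:
  assumes "pplane G" "blocking_set G B"
  shows "B \<noteq> {}"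
proof -
  have "vec.subspace G" "2 \<le> vec.dim G" using assms(1) unfolding pplane_def by auto
  then obtain L where "pline L" "L \<subseteq> G" by (rule subspace_dim_ge_2_obtain_pline)
  then show ?thesis using assms(2) unfolding blocking_set_def by blast
qed

lemma linear_inj_image_subspace_dim:
  fixes F :: "'a::field^'n \<Rightarrow> 'a^'n"
  assumes "Vector_Spaces.linear (*s) (*s) F" "inj F" "vec.subspace S"
  shows "vec.subspace (F ` S)" "vec.dim (F ` S) = vec.dim S"
  using assms vec.linear_subspace_image vec.dim_image_eq[of F S] by (metis inj_on_subset subset_UNIV)+

lemma ppoint_linear_image:
  fixes F :: "'a::field^'n \<Rightarrow> 'a^'n"
  assumes "Vector_Spaces.linear (*s) (*s) F" "inj F" "ppoint P"
  shows "ppoint (F ` P)"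
  using assms linear_inj_image_subspace_dim[OF assms(1,2)] unfolding ppoint_def by simp

lemma pline_linear_image:
  fixes F :: "'a::field^'n \<Rightarrow> 'a^'n"
  assumes "Vector_Spaces.linear (*s) (*s) F" "inj F" "pline L"
  shows "pline (F ` L)"
  using assms linear_inj_image_subspace_dim[OF assms(1,2)] unfolding pline_def by simp

lemma blocking_set_linear_image:
  fixes F :: "'a::field^'n \<Rightarrow> 'a^'n"
  assumes lin: "Vector_Spaces.linear (*s) (*s) F" and bij: "bij F" and B: "blocking_set G B"
  shows "blocking_set (F ` G) ((`) F ` B)"
proof -
  have inj: "inj F" using bij bij_is_inj by blast
  have inv_lin: "Vector_Spaces.linear (*s) (*s) (inv F)"
    using vec.inj_linear_imp_inv_linear lin inj by blast
  have inv_inj: "inj (inv F)" using bij by (simp add: bij_imp_bij_inv bij_is_inj)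
  show ?thesis unfolding blocking_set_def
  proof safe
    fix P assume "P \<in> B"
    then have "ppoint P" "P \<subseteq> G" using B unfolding blocking_set_def points_of_def by auto
    then show "F ` P \<in> points_of (F ` G)"
      unfolding points_of_def using ppoint_linear_image[OF lin inj] by blast
  next
    fix L assume L: "pline L" "L \<subseteq> F ` G"
    have "inv F ` L \<subseteq> inv F ` F ` G" using L(2) by (rule image_mono)
    then have "inv F ` L \<subseteq> G" by (simp add: image_image inv_f_f[OF inj])
    with pline_linear_image[OF inv_lin inv_inj L(1)]
    obtain P where P: "P \<in> B" "P \<subseteq> inv F ` L" using B unfolding blocking_set_def by blast
    have "F ` P \<subseteq> F ` inv F ` L" using P(2) by (rule image_mono)
    also have "\<dots> = L" using bij by (simp add: bij_is_surj image_f_inv_f)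
    finally show "\<exists>Q\<in>(`) F ` B. Q \<subseteq> L" using P(1) by blast
  qed
qed

lemma minimal_blocking_set_linear_image:
  fixes F :: "'a::field^'n \<Rightarrow> 'a^'n"
  assumes lin: "Vector_Spaces.linear (*s) (*s) F" and bij: "bij F" and B: "minimal_blocking_set G B"
  shows "minimal_blocking_set (F ` G) ((`) F ` B)"
  unfolding minimal_blocking_set_def
proof (intro conjI allI impI notI)
  show "blocking_set (F ` G) ((`) F ` B)"
    using blocking_set_linear_image[OF lin bij] B unfolding minimal_blocking_set_def by blast
next
  have inj: "inj F" using bij bij_is_inj by blast
  have inv_lin: "Vector_Spaces.linear (*s) (*s) (inv F)"
    using vec.inj_linear_imp_inv_linear lin inj by blast
  fix B' assume B': "B' \<subset> (`) F ` B" "blocking_set (F ` G) B'"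
  have "blocking_set G ((`) (inv F) ` B')"
    using blocking_set_linear_image[OF inv_lin bij_imp_bij_inv[OF bij] B'(2)] inj
    by (simp add: image_comp)
  moreover have "(`) (inv F) ` B' \<subset> B"
  proof -
    have "(`) (inv F) ` B' \<subseteq> (`) (inv F) ` (`) F ` B" using B'(1) by blast
    also have "\<dots> = B" by (simp add: image_image inv_f_f[OF inj])
    finally have sub: "(`) (inv F) ` B' \<subseteq> B" .
    have "(`) F ` (`) (inv F) ` B' = B'"
      by (simp add: image_image surj_f_inv_f[OF bij_is_surj[OF bij]])
    then show ?thesis using sub B'(1) by auto
  qed
  ultimately show False using B unfolding minimal_blocking_set_def by blast
qed

lemma projection_along_exists:
  fixes Om Gam :: "('a::field^'n) set"
  assumes Om: "vec.subspace Om" and Gam: "vec.subspace Gam" and skew: "Om \<inter> Gam = {0}"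
  obtains p where "Vector_Spaces.linear (*s) (*s) p" "\<And>x. x \<in> Om \<Longrightarrow> p x = 0"
    "\<And>x. x \<in> Gam \<Longrightarrow> p x = x"
proof -
  obtain BO where BO: "finite BO" "BO \<subseteq> Om" "vec.independent BO" "vec.span BO = Om"
    "card BO = vec.dim Om"
    by (rule vec.basis_subspace_exists[OF Om])
  obtain BG where BG: "finite BG" "BG \<subseteq> Gam" "vec.independent BG" "vec.span BG = Gam"
    "card BG = vec.dim Gam"
    by (rule vec.basis_subspace_exists[OF Gam])
  have "vec.dim (BO \<union> BG) = vec.dim (vec.span (BO \<union> BG))" by (simp add: vec.dim_span)
  also have "\<dots> = vec.dim Om + vec.dim Gam"
    using vec.dim_sums_Int[OF Om Gam] skew unfolding vec.span_Un BO(4) BG(4) by simp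
  finally have "card (BO \<union> BG) \<le> vec.dim (BO \<union> BG)" using BO(5) BG(5) card_Un_le[of BO BG] by simp
  then have indep: "vec.independent (BO \<union> BG)"
    using vec.card_le_dim_spanning[of "BO \<union> BG" "BO \<union> BG"] BO(1) BG(1) vec.span_superset by blast
  have disjoint: "BO \<inter> BG = {}"
  proof (rule equals0I)
    fix b assume b: "b \<in> BO \<inter> BG"
    then have "b \<in> Om \<inter> Gam" using BO(2) BG(2) by blast
    then have "b = 0" using skew by blast
    then show False using b BO(3) vec.dependent_zero by blast
  qed
  obtain p where p: "Vector_Spaces.linear (*s) (*s) p" "\<forall>b\<in>BO \<union> BG. p b = (if b \<in> BO then 0 else b)"
    using vec.linear_independent_extend[OF indep, of "\<lambda>b. if b \<in> BO then 0 else b"] by blast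
  have "p x = 0" if "x \<in> Om" for x
    using vec.linear_eq_0_on_span[OF p(1), of BO x] p(2) that BO(4) by auto
  moreover have "p x = x" if "x \<in> Gam" for x
  proof -
    have "p b = id b" if "b \<in> BG" for b using that p(2) disjoint by auto
    then show ?thesis using vec.linear_eq_on[OF p(1) vec.linear_id, of x BG] that BG(4) by simp
  qed
  ultimately show ?thesis using that p(1) by blast
qed

lemma linear_exists_bij_inverse_on:
  fixes p :: "'a::field^'n \<Rightarrow> 'a^'n"
  assumes p: "Vector_Spaces.linear (*s) (*s) p" and S: "vec.subspace S" and inj: "inj_on p S"
  obtains F where "Vector_Spaces.linear (*s) (*s) F" "bij F" "\<And>x. x \<in> S \<Longrightarrow> F (p x) = x"
proof -
  obtain g where g: "Vector_Spaces.linear (*s) (*s) g" "\<And>x. x \<in> S \<Longrightarrow> g (p x) = x"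
    using vec.linear_exists_left_inverse_on[OF p S inj] by blast
  have "p (g y) = y" if "y \<in> p ` S" for y using that g(2) by auto
  then have inj_g: "inj_on g (p ` S)" by (rule inj_on_inverseI)
  obtain C where C: "finite C" "C \<subseteq> p ` S" "vec.independent C" "vec.span C = p ` S"
    "card C = vec.dim (p ` S)"
    by (rule vec.basis_subspace_exists[OF vec.linear_subspace_image[OF p S]])
  have indep_gC: "vec.independent (g ` C)"
    using vec.linear_independent_injective_image[OF g(1) C(3)] inj_g C(4) by simp
  obtain F where F: "Vector_Spaces.linear (*s) (*s) F" "inj F" "\<forall>x\<in>C. F x = g x"
    using vec.linear_independent_extend_inj[OF C(3) indep_gC inj_on_subset[OF inj_g C(2)]] by blast
  have "F y = g y" if "y \<in> p ` S" for y
    using vec.linear_eq_on[OF F(1) g(1), of y C] F(3) that C(4) by auto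
  then have "F (p x) = x" if "x \<in> S" for x using that g(2) by simp
  moreover have "bij F" using F(2) vec.linear_inj_imp_surj[OF F(1) F(2)] by (simp add: bij_def)
  ultimately show ?thesis using that[OF F(1)] by blast
qed

lemma dim_le_dim_kernel_on_plus_one:
  fixes f :: "'a::field^'n \<Rightarrow> 'a^'n"
  assumes f: "Vector_Spaces.linear (*s) (*s) f" and S: "vec.subspace S" and "vec.dim (f ` S) \<le> 1"
  shows "vec.dim S \<le> vec.dim (S \<inter> {x. f x = 0}) + 1"
proof (cases "\<exists>y\<in>S. f y \<noteq> 0")
  case True
  then obtain y where y: "y \<in> S" "f y \<noteq> 0" by blast
  define N where "N = S \<inter> {x. f x = 0}"
  have sub: "vec.span {f y} \<subseteq> f ` S"
    using y vec.linear_subspace_image[OF f S] by (intro vec.span_minimal) auto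
  moreover have "vec.dim (f ` S) \<le> vec.dim (vec.span {f y})"
    using assms(3) y by (simp add: vec.dim_span)
  ultimately have image: "vec.span {f y} = f ` S"
    using vec.subspace_dim_equal[OF vec.subspace_span vec.linear_subspace_image[OF f S]] by simp
  have "S \<subseteq> vec.span (insert y N)"
  proof
    fix x assume x: "x \<in> S"
    then obtain c where "f x = c *s f y" using image[symmetric] vec.span_singleton by blast
    then have "x - c *s y \<in> N"
      unfolding N_def using x y S f by (simp add: vec.subspace_diff vec.subspace_scale vec.linear_diff vec.linear_scale)
    then show "x \<in> vec.span (insert y N)" unfolding vec.span_breakdown_eq using vec.span_base by blast
  qed
  then have "vec.dim S \<le> vec.dim (insert y N)" by (metis vec.dim_span vec.dim_subset)
  also have "\<dots> \<le> vec.dim N + 1" by (simp add: vec.dim_insert)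
  finally show ?thesis unfolding N_def .
next
  case False
  then have "S \<inter> {x. f x = 0} = S" by blast
  then show ?thesis by simp
qed

locale cone_projection =
  fixes Om Gam :: "('a::field^'n) set" and B :: "('a^'n) set set" and p :: "'a^'n \<Rightarrow> 'a^'n"
  assumes subspace_Om: "vec.subspace Om" and subspace_Gam: "vec.subspace Gam"
    and linear_p: "Vector_Spaces.linear (*s) (*s) p"
    and p_Om: "\<And>x. x \<in> Om \<Longrightarrow> p x = 0" and p_Gam: "\<And>x. x \<in> Gam \<Longrightarrow> p x = x"
    and B_points: "B \<subseteq> points_of Gam" and B_nonempty: "B \<noteq> {}"
begin

lemmas p_linear_simps =
  vec.linear_add[OF linear_p] vec.linear_diff[OF linear_p] vec.linear_scale[OF linear_p]
  vec.linear_0[OF linear_p]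

lemma pjoin_decomp:
  assumes "x \<in> pjoin Om Gam"
  shows "x - p x \<in> Om" "p x \<in> Gam"
proof -
  obtain a c where ac: "a \<in> Om" "c \<in> Gam" "x = a + c"
    using assms mem_pjoin_iff[OF subspace_Om subspace_Gam] by blast
  then have "p x = c" by (simp add: p_linear_simps p_Om p_Gam)
  with ac show "x - p x \<in> Om" "p x \<in> Gam" by simp_all
qed

lemma span_singleton_mem_cone_iff:
  assumes x: "x \<in> pjoin Om Gam" "x \<noteq> 0"
  shows "vec.span {x} \<in> cone Om B \<longleftrightarrow> p x = 0 \<or> vec.span {p x} \<in> B"
proof -
  have P_subspace: "vec.subspace P" if "P \<in> B" for P
    using that B_points unfolding points_of_def ppoint_def by blast
  have "vec.span {x} \<in> cone Om B \<longleftrightarrow> (\<exists>P\<in>B. x \<in> pjoin P Om)"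
    unfolding cone_def pjoin_def using span_singleton_mem_points_of_iff[OF vec.subspace_span x(2)]
    by blast
  also have "\<dots> \<longleftrightarrow> p x = 0 \<or> vec.span {p x} \<in> B"
  proof
    assume "\<exists>P\<in>B. x \<in> pjoin P Om"
    then obtain P a c where P: "P \<in> B" "a \<in> P" "c \<in> Om" "x = a + c"
      using mem_pjoin_iff[OF P_subspace subspace_Om] by blast
    have "ppoint P" "P \<subseteq> Gam" using P(1) B_points unfolding points_of_def by auto
    then have "p x = a" using P by (auto simp: p_linear_simps p_Om p_Gam)
    then show "p x = 0 \<or> vec.span {p x} \<in> B"
      using ppoint_eq_span_singleton[OF \<open>ppoint P\<close> P(2)] P(1) by auto
  next
    assume h: "p x = 0 \<or> vec.span {p x} \<in> B"
    show "\<exists>P\<in>B. x \<in> pjoin P Om"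
    proof (cases "p x = 0")
      case True
      then have "x \<in> Om" using pjoin_decomp(1)[OF x(1)] by simp
      then show ?thesis using B_nonempty unfolding pjoin_def by (meson UnI2 ex_in_conv vec.span_base)
    next
      case False
      have "x = p x + (x - p x)" by simp
      moreover have "p x \<in> vec.span {p x}" by (simp add: vec.span_base)
      ultimately have "x \<in> pjoin (vec.span {p x}) Om"
        using pjoin_decomp(1)[OF x(1)] mem_pjoin_iff[OF vec.subspace_span subspace_Om] by blast
      then show ?thesis using h False by blast
    qed
  qed
  finally show ?thesis .
qed

lemma cone_section_linear_image:
  assumes S: "vec.subspace S" "S \<subseteq> pjoin Om Gam"
    and inj: "inj_on p S" and onto: "p ` S = Gam"
  obtains F where "Vector_Spaces.linear (*s) (*s) F" "bij F" "F ` Gam = S"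
    "(`) F ` B = cone Om B \<inter> points_of S"
proof -
  obtain F where F: "Vector_Spaces.linear (*s) (*s) F" "bij F" "\<And>x. x \<in> S \<Longrightarrow> F (p x) = x"
    using linear_exists_bij_inverse_on[OF linear_p S(1) inj] by blast
  have F_point: "F ` vec.span {p x} = vec.span {x}" if "x \<in> S" for x
    using vec.linear_span_image[OF F(1), of "{p x}"] F(3)[OF that] by simp
  have p_nonzero: "p x \<noteq> 0" if "x \<in> S" "x \<noteq> 0" for x
    using that inj vec.linear_inj_on_iff_eq_0[OF linear_p S(1)] by blast
  have mem_cone: "vec.span {x} \<in> cone Om B \<longleftrightarrow> vec.span {p x} \<in> B" if "x \<in> S" "x \<noteq> 0" for x
    using span_singleton_mem_cone_iff[of x] that S(2) p_nonzero by blast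
  have "F ` Gam = S" unfolding onto[symmetric] image_image using F(3) by simp
  moreover have "(`) F ` B = cone Om B \<inter> points_of S"
  proof (intro equalityI subsetI)
    fix X assume "X \<in> (`) F ` B"
    then obtain P where P: "P \<in> B" "X = F ` P" by blast
    then have "P \<in> points_of Gam" using B_points by blast
    then obtain b where b: "b \<in> Gam" "b \<noteq> 0" "P = vec.span {b}"
      unfolding points_of_subspace_iff[OF subspace_Gam] by blast
    then obtain x where x: "x \<in> S" "b = p x" using onto by blast
    then have "x \<noteq> 0" using b(2) p_linear_simps(4) by auto
    note x = x(1) this b(3)[unfolded x(2)]
    have "X = vec.span {x}" using P(2) x(3) F_point[OF x(1)] by simp
    moreover have "vec.span {x} \<in> cone Om B" using mem_cone[OF x(1,2)] P(1) x(3) by simp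
    moreover have "vec.span {x} \<in> points_of S"
      using span_singleton_mem_points_of_iff[OF S(1) x(2)] x(1) by simp
    ultimately show "X \<in> cone Om B \<inter> points_of S" by simp
  next
    fix X assume X: "X \<in> cone Om B \<inter> points_of S"
    then obtain x where x: "x \<in> S" "x \<noteq> 0" "X = vec.span {x}"
      using points_of_subspace_iff[OF S(1)] by blast
    note x = x X[THEN IntD1, unfolded x(3)]
    then have "vec.span {p x} \<in> B" "X = F ` vec.span {p x}" using mem_cone F_point by simp_all
    then show "X \<in> (`) F ` B" by blast
  qed
  ultimately show ?thesis using that F(1,2) by blast
qed

lemma image_eq_Gam_if_inj_on:
  assumes "vec.subspace S" "S \<subseteq> pjoin Om Gam" "inj_on p S" "vec.dim S = vec.dim Gam"
  shows "p ` S = Gam"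
proof (rule vec.subspace_dim_equal)
  show "vec.subspace (p ` S)" using vec.linear_subspace_image[OF linear_p assms(1)] .
  show "p ` S \<subseteq> Gam" using pjoin_decomp(2) assms(2) by blast
  show "vec.dim Gam \<le> vec.dim (p ` S)"
    using vec.dim_image_eq[OF linear_p, of S] assms by (simp add: vec.span_eq_iff[THEN iffD2])
qed (rule subspace_Gam)

lemma pline_through_kernel_point_in_cone:
  assumes S: "vec.subspace S" "S \<subseteq> pjoin Om Gam"
    and r: "r \<in> S" "p r = 0"
    and x: "x \<in> S" "x \<noteq> 0" "vec.span {x} \<in> cone Om B"
  shows "points_of (vec.span {x, r}) \<subseteq> cone Om B"
proof
  fix Z assume "Z \<in> points_of (vec.span {x, r})"
  then obtain z where z: "z \<in> vec.span {x, r}" "z \<noteq> 0" "Z = vec.span {z}"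
    unfolding points_of_subspace_iff[OF vec.subspace_span] by blast
  obtain k where "z - k *s x \<in> vec.span {r}" using z(1) vec.span_breakdown_eq by blast
  then obtain c where "z - k *s x = c *s r" using vec.span_singleton by blast
  then have "z = c *s r + k *s x" by (simp add: algebra_simps)
  then have pz: "p z = k *s p x" using r(2) by (simp add: p_linear_simps)
  have "vec.span {x, r} \<subseteq> S" using S(1) r(1) x(1) by (intro vec.span_minimal) auto
  then have z_in: "z \<in> pjoin Om Gam" using z(1) S(2) by blast
  have "p x = 0 \<or> vec.span {p x} \<in> B"
    using span_singleton_mem_cone_iff[of x] x S(2) by blast
  then have "p z = 0 \<or> vec.span {p z} \<in> B"
    using pz span_singleton_scale[of k "p x"] by (cases "k = 0") auto
  then show "Z \<in> cone Om B" using span_singleton_mem_cone_iff[OF z_in z(2)] z(3) by blast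
qed

lemma cone_section_union_of_plines:
  assumes S: "vec.subspace S" "S \<subseteq> pjoin Om Gam"
    and r: "r \<in> S" "r \<noteq> 0" "p r = 0"
    and x: "x \<in> S" "x \<notin> vec.span {r}" "vec.span {x} \<in> cone Om B"
  obtains \<LL> where "\<LL> \<noteq> {}" "\<forall>L\<in>\<LL>. pline L \<and> vec.span {r} \<subseteq> L \<and> L \<subseteq> S"
    "cone Om B \<inter> points_of S = (\<Union>L\<in>\<LL>. points_of L)"
proof -
  define \<LL> where "\<LL> = {L. pline L \<and> vec.span {r} \<subseteq> L \<and> L \<subseteq> S \<and> points_of L \<subseteq> cone Om B}"
  have join_in: "vec.span {y, r} \<in> \<LL>"
    if y: "y \<in> S" "y \<notin> vec.span {r}" "vec.span {y} \<in> cone Om B" for y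
  proof -
    have "y \<noteq> 0" using y(2) vec.span_zero by blast
    moreover have "vec.span {r} \<subseteq> vec.span {y, r}" by (rule vec.span_mono) auto
    moreover have "vec.span {y, r} \<subseteq> S" using S(1) r(1) y(1) by (intro vec.span_minimal) auto
    ultimately show ?thesis unfolding \<LL>_def
      using pline_span_pair[OF y(2) r(2)] pline_through_kernel_point_in_cone[OF S r(1,3) y(1)] y(3)
      by blast
  qed
  have "\<LL> \<noteq> {}" using join_in[OF x] by blast
  moreover have "\<forall>L\<in>\<LL>. pline L \<and> vec.span {r} \<subseteq> L \<and> L \<subseteq> S" unfolding \<LL>_def by blast
  moreover have "cone Om B \<inter> points_of S = (\<Union>L\<in>\<LL>. points_of L)"
  proof (intro equalityI subsetI)
    fix X assume X: "X \<in> cone Om B \<inter> points_of S"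
    then obtain y where y: "y \<in> S" "y \<noteq> 0" "X = vec.span {y}"
      using points_of_subspace_iff[OF S(1)] by blast
    have "X \<in> points_of (vec.span {y, r})" if "y \<notin> vec.span {r}"
      using span_singleton_mem_points_of_iff[OF vec.subspace_span y(2)] y(3)
      by (simp add: vec.span_base)
    moreover have "X \<in> points_of (vec.span {x, r})" if "y \<in> vec.span {r}"
    proof -
      have "y \<in> vec.span {x, r}" using that vec.span_mono[of "{r}" "{x, r}"] by blast
      then show ?thesis using span_singleton_mem_points_of_iff[OF vec.subspace_span y(2)] y(3) by simp
    qed
    ultimately show "X \<in> (\<Union>L\<in>\<LL>. points_of L)"
      using join_in[OF y(1)] join_in[OF x] X y(3) by blast
  qed (auto simp: \<LL>_def points_of_def)
  ultimately show ?thesis by (rule that)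
qed

lemma exists_cone_point_off_kernel_point:
  assumes blocking: "blocking_set Gam B" and S: "pplane S" "S \<subseteq> pjoin Om Gam"
    and r: "r \<in> S" "p r = 0"
  obtains x where "x \<in> S" "x \<notin> vec.span {r}" "vec.span {x} \<in> cone Om B"
proof (cases "\<exists>y\<in>S. p y \<noteq> 0 \<and> vec.span {p y} \<in> B")
  case True
  then obtain y where y: "y \<in> S" "p y \<noteq> 0" "vec.span {p y} \<in> B" by blast
  have "y \<notin> vec.span {r}"
    using y(2) r(2) by (auto simp: vec.span_singleton p_linear_simps)
  moreover have "vec.span {y} \<in> cone Om B"
    using span_singleton_mem_cone_iff[of y] y S(2) p_linear_simps(4) by fastforce
  ultimately show ?thesis using that y(1) by blast
next
  case False
  have subspace_S: "vec.subspace S" and dim_S: "vec.dim S = 3" using S(1) unfolding pplane_def by auto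
  have image_sub: "p ` S \<subseteq> Gam" using pjoin_decomp(2) S(2) by blast
  have "\<not> 2 \<le> vec.dim (p ` S)"
  proof
    assume "2 \<le> vec.dim (p ` S)"
    then obtain L where L: "pline L" "L \<subseteq> p ` S"
      using subspace_dim_ge_2_obtain_pline vec.linear_subspace_image[OF linear_p subspace_S] by metis
    then obtain P where P: "P \<in> B" "P \<subseteq> L"
      using blocking image_sub unfolding blocking_set_def by blast
    then obtain v where "v \<noteq> 0" "v \<in> P" "P = vec.span {v}"
      using B_points ppoint_obtain_span_singleton unfolding points_of_def by blast
    then show False using False P L by blast
  qed
  then have "vec.dim S \<le> vec.dim (S \<inter> {x. p x = 0}) + 1"
    by (intro dim_le_dim_kernel_on_plus_one[OF linear_p subspace_S]) simp
  then have "\<not> S \<inter> {x. p x = 0} \<subseteq> vec.span {r}"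
    using dim_S vec.dim_subset[of "S \<inter> {x. p x = 0}" "vec.span {r}"]
    by (auto simp: vec.dim_span split: if_splits)
  then obtain x where x: "x \<in> S" "p x = 0" "x \<notin> vec.span {r}" by blast
  then have "vec.span {x} \<in> cone Om B"
    using span_singleton_mem_cone_iff[of x] S(2) vec.span_zero by blast
  then show ?thesis using that x by blast
qed

lemma cone_section_proj_equiv:
  assumes Gam: "pplane Gam" "minimal_blocking_set Gam B"
    and S: "pplane S" "S \<subseteq> pjoin Om Gam" and inj: "inj_on p S"
  shows "minimal_blocking_set S (cone Om B \<inter> points_of S) \<and> proj_equiv B (cone Om B \<inter> points_of S)"
proof -
  have subspace_S: "vec.subspace S" using S(1) unfolding pplane_def by blast
  have "p ` S = Gam"
    using image_eq_Gam_if_inj_on[OF subspace_S S(2) inj] S(1) Gam(1) unfolding pplane_def by simp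
  then obtain F where F: "Vector_Spaces.linear (*s) (*s) F" "bij F" "F ` Gam = S"
    "(`) F ` B = cone Om B \<inter> points_of S"
    using cone_section_linear_image[OF subspace_S S(2) inj] by blast
  show ?thesis
    using minimal_blocking_set_linear_image[OF F(1,2) Gam(2)] F unfolding proj_equiv_def by auto
qed

lemma cone_section_pencil:
  assumes blocking: "blocking_set Gam B"
    and S: "pplane S" "S \<subseteq> pjoin Om Gam" and not_inj: "\<not> inj_on p S"
  shows "\<exists>R \<LL>. ppoint R \<and> R \<subseteq> S \<and> \<LL> \<noteq> {} \<and> (\<forall>L\<in>\<LL>. pline L \<and> R \<subseteq> L \<and> L \<subseteq> S) \<and>
    cone Om B \<inter> points_of S = (\<Union>L\<in>\<LL>. points_of L)"
proof -
  have subspace_S: "vec.subspace S" using S(1) unfolding pplane_def by blast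
  obtain r where r: "r \<in> S" "r \<noteq> 0" "p r = 0"
    using not_inj vec.linear_inj_on_iff_eq_0[OF linear_p subspace_S] by blast
  obtain x where x: "x \<in> S" "x \<notin> vec.span {r}" "vec.span {x} \<in> cone Om B"
    by (rule exists_cone_point_off_kernel_point[OF blocking S r(1,3)])
  obtain \<LL> where \<LL>: "\<LL> \<noteq> {}" "\<forall>L\<in>\<LL>. pline L \<and> vec.span {r} \<subseteq> L \<and> L \<subseteq> S"
    "cone Om B \<inter> points_of S = (\<Union>L\<in>\<LL>. points_of L)"
    by (rule cone_section_union_of_plines[OF subspace_S S(2) r x])
  have "ppoint (vec.span {r})" "vec.span {r} \<subseteq> S"
    using ppoint_span_singleton[OF r(2)] span_singleton_subset_iff[OF subspace_S] r(1) by auto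
  with \<LL> show ?thesis by (intro exI[of _ "vec.span {r}"] exI[of _ \<LL>]) simp
qed

end

lemma cone_projection_exists:
  assumes Om: "vec.subspace Om" and Gam: "pplane Gam" "skew Om Gam" and blocking: "blocking_set Gam B"
  obtains p where "cone_projection Om Gam B p"
proof -
  have subspace_Gam: "vec.subspace Gam" using Gam(1) unfolding pplane_def by blast
  obtain p where p: "Vector_Spaces.linear (*s) (*s) p" "\<And>x. x \<in> Om \<Longrightarrow> p x = 0"
    "\<And>x. x \<in> Gam \<Longrightarrow> p x = x"
    using projection_along_exists[OF Om subspace_Gam] Gam(2) unfolding skew_def by blast
  have "B \<subseteq> points_of Gam" using blocking unfolding blocking_set_def by blast
  then show ?thesis
    using that cone_projection.intro[OF Om subspace_Gam p] blocking_set_plane_nonempty[OF Gam(1) blocking]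
    by blast
qed

theorem lemma5p8:
  fixes Om Gam pi :: "('a::{field,finite} ^ 'n::finite) set"
    and B :: "('a ^ 'n) set set"
    and t :: nat
  assumes "t \<ge> 1"
    and "vec.subspace Om" and "vec.dim Om = t - 1"
    and "pplane Gam" and "skew Om Gam"
    and "minimal_blocking_set Gam B" and "small_set B"
    and "pplane pi" and "pi \<subseteq> pjoin Om Gam"
  shows "cone Om B \<inter> points_of pi = points_of pi
      \<or> (\<exists>R \<LL>. ppoint R \<and> R \<subseteq> pi \<and> \<LL> \<noteq> {} \<and>
             (\<forall>L\<in>\<LL>. pline L \<and> R \<subseteq> L \<and> L \<subseteq> pi) \<and>
             cone Om B \<inter> points_of pi = (\<Union>L\<in>\<LL>. points_of L))
      \<or> (minimal_blocking_set pi (cone Om B \<inter> points_of pi)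
         \<and> proj_equiv B (cone Om B \<inter> points_of pi))"
proof -
  have blocking: "blocking_set Gam B" using assms(6) unfolding minimal_blocking_set_def by blast
  obtain p where "cone_projection Om Gam B p"
    using cone_projection_exists[OF assms(2,4,5) blocking] .
  then interpret cone_projection Om Gam B p .
  show ?thesis
  proof (cases "inj_on p pi")
    case True
    then show ?thesis using cone_section_proj_equiv[OF assms(4,6,8,9)] by blast
  next
    case False
    then show ?thesis using cone_section_pencil[OF blocking assms(8,9)] by blast
  qed
qed

end
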